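(* Let $k$ be a positive integer and suppose the graph $G$ satisfies $\tau(G)=\overline{\tau}(G)=\kappa'(G)=\overline{\kappa'}(G)=k$. Then $G=G_1*_k G_2$ where, for each $i=1,2$, either $G_i=K_1$ or $\tau(G_i)=\overline{\tau}(G_i)=\kappa'(G_i)=\overline{\kappa'}(G_i)=k$.
   Context: Graphs are finite, loopless, possibly with multiple edges. $\kappa'(G)$ is the edge connectivity; $\tau(G)$ is the maximum number of edge-disjoint spanning trees of a connected graph $G$ ($\tau(K_1)=\infty$). $\overline{\kappa'}(G)=\max\{\kappa'(H): H\subseteq G\}$ and $\overline{\tau}(G)=\max\{\tau(H): H\subseteq G\}$, maxima over subgraphs. For vertex-disjoint connected graphs $G_1,G_2$ and a set $K$ of $k$ edges each having one end in $V(G_1)$ and the other in $V(G_2)$, the $k$-edge-join $G_1*_k G_2$ is the graph with vertex set $V(G_1)\cup V(G_2)$ and edge set $E(G_1)\cup E(G_2)\cup K$. *)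

theory Defs
  imports Main "HOL-Library.Extended_Nat"
begin

text \<open>Finite loopless multigraphs.  Edges are elements of an abstract type 'e;
  the incidence map inc assigns to every edge its set of two (distinct) ends.\<close>

definition graph :: "('e \<Rightarrow> 'a set) \<Rightarrow> 'a set \<Rightarrow> 'e set \<Rightarrow> bool" where
  "graph inc V E \<longleftrightarrow> finite V \<and> V \<noteq> {} \<and> finite E \<and>
     (\<forall>e\<in>E. inc e \<subseteq> V \<and> card (inc e) = 2)"

definition adj :: "('e \<Rightarrow> 'a set) \<Rightarrow> 'e set \<Rightarrow> ('a \<times> 'a) set" where
  "adj inc E = {(x, y). \<exists>e\<in>E. inc e = {x, y}}"

definition connected_graph :: "('e \<Rightarrow> 'a set) \<Rightarrow> 'a set \<Rightarrow> 'e set \<Rightarrow> bool" where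
  "connected_graph inc V E \<longleftrightarrow> (\<forall>u\<in>V. \<forall>v\<in>V. (u, v) \<in> (adj inc E)\<^sup>*)"

definition acyclic_edges :: "('e \<Rightarrow> 'a set) \<Rightarrow> 'e set \<Rightarrow> bool" where
  "acyclic_edges inc T \<longleftrightarrow>
     (\<forall>e\<in>T. \<forall>x y. inc e = {x, y} \<longrightarrow> (x, y) \<notin> (adj inc (T - {e}))\<^sup>*)"

definition spanning_tree :: "('e \<Rightarrow> 'a set) \<Rightarrow> 'a set \<Rightarrow> 'e set \<Rightarrow> 'e set \<Rightarrow> bool" where
  "spanning_tree inc V E T \<longleftrightarrow> T \<subseteq> E \<and> connected_graph inc V T \<and> acyclic_edges inc T"

text \<open>tau: maximum number of edge-disjoint spanning trees (infinite for K_1).\<close>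
definition tau :: "('e \<Rightarrow> 'a set) \<Rightarrow> 'a set \<Rightarrow> 'e set \<Rightarrow> enat" where
  "tau inc V E = Sup {enat n | n. \<exists>T :: nat \<Rightarrow> 'e set.
      (\<forall>i<n. spanning_tree inc V E (T i)) \<and>
      (\<forall>i<n. \<forall>j<n. i \<noteq> j \<longrightarrow> T i \<inter> T j = {})}"

text \<open>Edge connectivity: minimum size of an edge set whose removal disconnects
  the graph (infinite for K_1, where no such set exists).\<close>
definition kappa' :: "('e \<Rightarrow> 'a set) \<Rightarrow> 'a set \<Rightarrow> 'e set \<Rightarrow> enat" where
  "kappa' inc V E = Inf {enat (card F) | F. F \<subseteq> E \<and> \<not> connected_graph inc V (E - F)}"

definition subgraph :: "('e \<Rightarrow> 'a set) \<Rightarrow> 'a set \<Rightarrow> 'e set \<Rightarrow> 'a set \<Rightarrow> 'e set \<Rightarrow> bool" where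
  "subgraph inc V' E' V E \<longleftrightarrow> V' \<subseteq> V \<and> E' \<subseteq> E \<and> (\<forall>e\<in>E'. inc e \<subseteq> V')"

definition tau_bar :: "('e \<Rightarrow> 'a set) \<Rightarrow> 'a set \<Rightarrow> 'e set \<Rightarrow> enat" where
  "tau_bar inc V E = Sup {tau inc V' E' | V' E'. subgraph inc V' E' V E \<and> card V' \<ge> 2}"

definition kappa'_bar :: "('e \<Rightarrow> 'a set) \<Rightarrow> 'a set \<Rightarrow> 'e set \<Rightarrow> enat" where
  "kappa'_bar inc V E = Sup {kappa' inc V' E' | V' E'. subgraph inc V' E' V E \<and> card V' \<ge> 2}"

definition is_K1 :: "'a set \<Rightarrow> 'e set \<Rightarrow> bool" where
  "is_K1 V E \<longleftrightarrow> card V = 1 \<and> E = {}"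

definition is_edge_join :: "('e \<Rightarrow> 'a set) \<Rightarrow> 'a set \<Rightarrow> 'e set \<Rightarrow> 'a set \<Rightarrow> 'e set
    \<Rightarrow> 'a set \<Rightarrow> 'e set \<Rightarrow> nat \<Rightarrow> bool" where
  "is_edge_join inc V E V1 E1 V2 E2 k \<longleftrightarrow>
     V1 \<inter> V2 = {} \<and> V = V1 \<union> V2 \<and>
     graph inc V1 E1 \<and> graph inc V2 E2 \<and>
     connected_graph inc V1 E1 \<and> connected_graph inc V2 E2 \<and>
     (\<exists>K. card K = k \<and> E = E1 \<union> E2 \<union> K \<and> K \<inter> E1 = {} \<and> K \<inter> E2 = {} \<and>
          (\<forall>e\<in>K. \<exists>x\<in>V1. \<exists>y\<in>V2. inc e = {x, y}))"

end

theory Submission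
  imports Defs
begin

text \<open>Let \<open>T\<^sub>1, \<dots>, T\<^sub>k\<close> be edge-disjoint spanning trees of \<open>G\<close> and \<open>F\<close> a disconnecting
  edge set with \<open>|F| = k\<close>.  The component \<open>A\<close> of a vertex in \<open>G - F\<close> has boundary
  \<open>\<partial>A \<subseteq> F\<close>, and every spanning tree meets \<open>\<partial>A\<close>; by disjointness \<open>k \<le> |\<partial>A| \<le> |F| = k\<close>,
  so each \<open>T\<^sub>i\<close> crosses \<open>\<partial>A\<close> exactly once.  Dropping that crossing edge splits \<open>T\<^sub>i\<close> into
  spanning trees of \<open>G[A]\<close> and \<open>G[V - A]\<close>, so \<open>G = G[A] *\<^sub>k G[V - A]\<close> and both sides carry
  \<open>k\<close> edge-disjoint spanning trees.  A side with at least two vertices therefore has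
  \<open>\<tau>, \<kappa>' \<ge> k\<close>, while all four parameters are bounded by the subgraph maxima of \<open>G\<close>,
  which equal \<open>k\<close>.\<close>

definition spanning_tree_packing ::
    "('e \<Rightarrow> 'a set) \<Rightarrow> 'a set \<Rightarrow> 'e set \<Rightarrow> nat \<Rightarrow> (nat \<Rightarrow> 'e set) \<Rightarrow> bool" where
  "spanning_tree_packing inc V E k T \<longleftrightarrow>
     (\<forall>i<k. spanning_tree inc V E (T i)) \<and> (\<forall>i<k. \<forall>j<k. i \<noteq> j \<longrightarrow> T i \<inter> T j = {})"

definition induced_edges :: "('e \<Rightarrow> 'a set) \<Rightarrow> 'e set \<Rightarrow> 'a set \<Rightarrow> 'e set" where
  "induced_edges inc E A = {e \<in> E. inc e \<subseteq> A}"

definition boundary_edges :: "('e \<Rightarrow> 'a set) \<Rightarrow> 'e set \<Rightarrow> 'a set \<Rightarrow> 'e set" where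
  "boundary_edges inc E A = {e \<in> E. inc e \<inter> A \<noteq> {} \<and> \<not> inc e \<subseteq> A}"

lemma Sup_enat_in:
  fixes A :: "enat set"
  assumes "Sup A = enat k" "k > 0"
  shows "enat k \<in> A"
proof -
  have "A \<noteq> {}" using assms by (auto simp: Sup_enat_def zero_enat_def)
  moreover have "finite A" using assms \<open>A \<noteq> {}\<close> by (auto simp: Sup_enat_def split: if_splits)
  ultimately show ?thesis using assms(1) Max_in by (metis Sup_enat_def)
qed

lemma Inf_enat_in:
  fixes A :: "enat set"
  assumes "Inf A = enat k"
  shows "enat k \<in> A"
proof -
  have "A \<noteq> {}" using assms by (auto simp: Inf_enat_def)
  then have "(LEAST x. x \<in> A) \<in> A" by (auto intro: LeastI)
  then show ?thesis using assms \<open>A \<noteq> {}\<close> by (auto simp: Inf_enat_def)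
qed

lemma sum_card_Int_disjoint_family_le:
  fixes k :: nat
  assumes "finite F" and "\<forall>i<k. \<forall>j<k. i \<noteq> j \<longrightarrow> T i \<inter> T j = {}"
  shows "(\<Sum>i<k. card (T i \<inter> F)) \<le> card F"
proof -
  have "(\<Sum>i<k. card (T i \<inter> F)) = card (\<Union>i<k. T i \<inter> F)"
    by (rule card_UN_disjoint[symmetric]) (use assms in auto)
  also have "\<dots> \<le> card F" using assms(1) by (intro card_mono) auto
  finally show ?thesis .
qed

lemma card_ge_disjoint_family_hitting:
  assumes "finite F" and "\<forall>i<k. \<forall>j<k. i \<noteq> j \<longrightarrow> T i \<inter> T j = {}"
    and "\<forall>i<k. T i \<inter> F \<noteq> {}"
  shows "k \<le> card F"
proof -
  have "k = (\<Sum>i<k. 1::nat)" by simp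
  also have "\<dots> \<le> (\<Sum>i<k. card (T i \<inter> F))"
    using assms by (intro sum_mono) (simp add: Suc_le_eq card_gt_0_iff)
  also have "\<dots> \<le> card F" using sum_card_Int_disjoint_family_le assms by blast
  finally show ?thesis .
qed

lemma disjoint_family_hits_once:
  assumes "finite F" and "card F \<le> k" and "\<forall>i<k. \<forall>j<k. i \<noteq> j \<longrightarrow> T i \<inter> T j = {}"
    and "\<forall>i<k. T i \<inter> F \<noteq> {}" and "j < k"
  shows "\<exists>f. T j \<inter> F = {f}"
proof -
  have pos: "card (T i \<inter> F) \<ge> 1" if "i < k" for i
    using assms(1,4) that by (simp add: Suc_le_eq card_gt_0_iff)
  have "card (T j \<inter> F) \<le> 1"
  proof (rule ccontr)
    assume "\<not> card (T j \<inter> F) \<le> 1"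
    have "k < 2 + (\<Sum>i\<in>{..<k} - {j}. 1::nat)" using assms(5) by simp
    also have "\<dots> \<le> card (T j \<inter> F) + (\<Sum>i\<in>{..<k} - {j}. card (T i \<inter> F))"
      using \<open>\<not> card (T j \<inter> F) \<le> 1\<close> pos by (intro add_mono sum_mono) auto
    also have "\<dots> = (\<Sum>i<k. card (T i \<inter> F))"
      using assms(5) by (simp add: sum.remove)
    also have "\<dots> \<le> card F" using sum_card_Int_disjoint_family_le assms(1,3) by blast
    finally show False using assms(2) by simp
  qed
  then have "card (T j \<inter> F) = 1" using pos[OF assms(5)] by simp
  then show ?thesis by (metis card_1_singleton_iff One_nat_def)
qed

lemma adj_mono: "S \<subseteq> T \<Longrightarrow> adj inc S \<subseteq> adj inc T"
  unfolding adj_def by auto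

lemma connected_graph_mono: "connected_graph inc V T \<Longrightarrow> T \<subseteq> E \<Longrightarrow> connected_graph inc V E"
  unfolding connected_graph_def using rtrancl_mono[OF adj_mono] by blast

lemma acyclic_edges_subset:
  assumes "acyclic_edges inc T" and "S \<subseteq> T"
  shows "acyclic_edges inc S"
  unfolding acyclic_edges_def
proof (intro ballI allI impI)
  fix e x y assume "e \<in> S" "inc e = {x, y}"
  have "(adj inc (S - {e}))\<^sup>* \<subseteq> (adj inc (T - {e}))\<^sup>*"
    using assms(2) by (intro rtrancl_mono adj_mono) blast
  then show "(x, y) \<notin> (adj inc (S - {e}))\<^sup>*"
    using assms \<open>e \<in> S\<close> \<open>inc e = {x, y}\<close> unfolding acyclic_edges_def by blast
qed

lemma rtrancl_adj_closed:
  assumes "(u, w) \<in> (adj inc S)\<^sup>*" and "u \<in> A"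
    and "\<And>e x y. e \<in> S \<Longrightarrow> inc e = {x, y} \<Longrightarrow> x \<in> A \<Longrightarrow> y \<in> A"
  shows "w \<in> A"
  using assms(1,2)
proof (induction rule: rtrancl_induct)
  case (step y z)
  then obtain e where "e \<in> S" "inc e = {y, z}" unfolding adj_def by auto
  then show ?case using step assms(3) by blast
qed

lemma connected_graph_meets_cut:
  "connected_graph inc V T \<Longrightarrow> T \<subseteq> E \<Longrightarrow> \<not> connected_graph inc V (E - F) \<Longrightarrow> T \<inter> F \<noteq> {}"
  using connected_graph_mono[of inc V T "E - F"] by blast

lemma connected_graph_meets_boundary:
  assumes conn: "connected_graph inc V T" and "T \<subseteq> E" and "A \<subseteq> V" and "a \<in> A" and "b \<in> V - A"
  shows "T \<inter> boundary_edges inc E A \<noteq> {}"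
proof
  assume none: "T \<inter> boundary_edges inc E A = {}"
  have "(a, b) \<in> (adj inc T)\<^sup>*" using conn assms(3-5) unfolding connected_graph_def by blast
  then have "b \<in> A"
  proof (rule rtrancl_adj_closed[OF _ \<open>a \<in> A\<close>])
    fix e x y assume "e \<in> T" "inc e = {x, y}" "x \<in> A"
    then show "y \<in> A" using none \<open>T \<subseteq> E\<close> unfolding boundary_edges_def by blast
  qed
  then show False using assms(5) by blast
qed

text \<open>If a connected edge set \<open>T\<close> crosses the boundary of \<open>A\<close> at most once, through \<open>e\<^sub>0\<close>,
  then a walk that leaves \<open>A\<close> can only re-enter it at \<open>x\<^sub>0\<close>, the end of \<open>e\<^sub>0\<close> in \<open>A\<close>.\<close>

lemma connected_graph_induced_single_crossing:
  assumes conn: "connected_graph inc V T" and "A \<subseteq> V" and "T \<subseteq> E"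
    and cross: "T \<inter> boundary_edges inc E A \<subseteq> {e\<^sub>0}"
    and e\<^sub>0: "inc e\<^sub>0 = {x\<^sub>0, y\<^sub>0}" "x\<^sub>0 \<in> A" "y\<^sub>0 \<notin> A"
  shows "connected_graph inc A (T \<inter> induced_edges inc E A)"
  unfolding connected_graph_def
proof (intro ballI)
  fix a b assume "a \<in> A" "b \<in> A"
  let ?R = "(adj inc (T \<inter> induced_edges inc E A))\<^sup>*"
  have "(w \<in> A \<longrightarrow> (a, w) \<in> ?R) \<and> (w \<notin> A \<longrightarrow> (a, x\<^sub>0) \<in> ?R)"
    if "(a, w) \<in> (adj inc T)\<^sup>*" for w
    using that
  proof (induction rule: rtrancl_induct)
    case base
    then show ?case using \<open>a \<in> A\<close> by simp
  next
    case (step w z)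
    then obtain e where "e \<in> T" and e: "inc e = {w, z}" unfolding adj_def by auto
    consider "inc e \<subseteq> A" | "inc e \<inter> A = {}" | "e = e\<^sub>0"
      using \<open>e \<in> T\<close> \<open>T \<subseteq> E\<close> cross unfolding boundary_edges_def by blast
    then show ?case
    proof cases
      case 1
      then have "(w, z) \<in> adj inc (T \<inter> induced_edges inc E A)"
        using \<open>e \<in> T\<close> \<open>T \<subseteq> E\<close> e unfolding adj_def induced_edges_def by blast
      then show ?thesis using step.IH 1 e by (auto intro: rtrancl_into_rtrancl)
    next
      case 2
      then show ?thesis using step.IH e by auto
    next
      case 3
      then have "w = x\<^sub>0 \<and> z = y\<^sub>0 \<or> w = y\<^sub>0 \<and> z = x\<^sub>0"
        using e e\<^sub>0 by (auto simp: doubleton_eq_iff)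
      then show ?thesis using step.IH e\<^sub>0 by auto
    qed
  qed
  moreover have "(a, b) \<in> (adj inc T)\<^sup>*"
    using conn \<open>a \<in> A\<close> \<open>b \<in> A\<close> \<open>A \<subseteq> V\<close> unfolding connected_graph_def by blast
  ultimately show "(a, b) \<in> ?R" using \<open>b \<in> A\<close> by blast
qed

lemma graph_edge_eq:
  assumes "graph inc V E" "e \<in> E" "x \<in> inc e" "y \<in> inc e" "x \<noteq> y"
  shows "inc e = {x, y}"
proof -
  have "card (inc e) = 2" "finite (inc e)" using assms(1,2) unfolding graph_def
    by (auto intro: finite_subset)
  then show ?thesis using assms(3-5) by (metis card_2_iff doubleton_eq_iff insertE singletonD)
qed

lemma boundary_edge_ends:
  assumes "graph inc V E" and "e \<in> boundary_edges inc E A"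
  shows "\<exists>x\<in>A. \<exists>y\<in>V - A. inc e = {x, y}"
proof -
  obtain x y where "x \<in> inc e \<inter> A" "y \<in> inc e - A" "e \<in> E"
    using assms(2) unfolding boundary_edges_def by blast
  moreover have "inc e \<subseteq> V" using assms(1) \<open>e \<in> E\<close> unfolding graph_def by blast
  ultimately show ?thesis using graph_edge_eq[OF assms(1)] by blast
qed

lemma boundary_edges_Diff:
  assumes "graph inc V E"
  shows "boundary_edges inc E (V - A) = boundary_edges inc E A"
  using assms unfolding graph_def boundary_edges_def by blast

lemma boundary_edges_reach_subset:
  assumes G: "graph inc V E"
    and A: "A = {x \<in> V. (u, x) \<in> (adj inc (E - F))\<^sup>*}"
  shows "boundary_edges inc E A \<subseteq> F"
proof
  fix e assume "e \<in> boundary_edges inc E A"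
  then obtain x y where "x \<in> A" "y \<in> V - A" and e: "inc e = {x, y}" "e \<in> E"
    using boundary_edge_ends[OF G] unfolding boundary_edges_def by blast
  show "e \<in> F"
  proof (rule ccontr)
    assume "e \<notin> F"
    then have "(x, y) \<in> adj inc (E - F)" using e unfolding adj_def by blast
    then have "y \<in> A" using \<open>x \<in> A\<close> \<open>y \<in> V - A\<close> A by (auto intro: rtrancl_into_rtrancl)
    then show False using \<open>y \<in> V - A\<close> by blast
  qed
qed

lemma graph_induced_edges:
  "graph inc V E \<Longrightarrow> A \<subseteq> V \<Longrightarrow> A \<noteq> {} \<Longrightarrow> graph inc A (induced_edges inc E A)"
  unfolding graph_def induced_edges_def by (auto intro: finite_subset)

lemma subgraph_induced_edges: "A \<subseteq> V \<Longrightarrow> subgraph inc A (induced_edges inc E A) V E"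
  unfolding subgraph_def induced_edges_def by auto

lemma is_edge_join_boundary:
  assumes G: "graph inc V E" and "A \<subseteq> V" "A \<noteq> {}" "A \<noteq> V"
    and "connected_graph inc A (induced_edges inc E A)"
    and "connected_graph inc (V - A) (induced_edges inc E (V - A))"
  shows "is_edge_join inc V E A (induced_edges inc E A) (V - A) (induced_edges inc E (V - A))
           (card (boundary_edges inc E A))"
proof -
  let ?K = "boundary_edges inc E A"
  have "E = induced_edges inc E A \<union> induced_edges inc E (V - A) \<union> ?K"
    using G unfolding graph_def induced_edges_def boundary_edges_def by blast
  moreover have "?K \<inter> induced_edges inc E A = {}" "?K \<inter> induced_edges inc E (V - A) = {}"
    unfolding induced_edges_def boundary_edges_def by blast+
  moreover have "graph inc A (induced_edges inc E A)" "graph inc (V - A) (induced_edges inc E (V - A))"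
    using assms by (auto intro!: graph_induced_edges)
  moreover have "A \<inter> (V - A) = {}" "V = A \<union> (V - A)" using \<open>A \<subseteq> V\<close> by blast+
  ultimately show ?thesis
    using assms(5,6) boundary_edge_ends[OF G] unfolding is_edge_join_def by blast
qed

lemma tau_eq_Sup_packings:
  "tau inc V E = Sup {enat n | n. \<exists>T. spanning_tree_packing inc V E n T}"
  unfolding tau_def spanning_tree_packing_def ..

lemma tau_ge_packing: "spanning_tree_packing inc V E k T \<Longrightarrow> enat k \<le> tau inc V E"
  unfolding tau_eq_Sup_packings by (rule Sup_upper) blast

lemma kappa'_ge_packing:
  assumes G: "graph inc V E" and P: "spanning_tree_packing inc V E k T"
  shows "enat k \<le> kappa' inc V E"
  unfolding kappa'_def
proof (rule Inf_greatest, clarify)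
  fix F assume "F \<subseteq> E" "\<not> connected_graph inc V (E - F)"
  have "T i \<inter> F \<noteq> {}" if "i < k" for i
  proof (rule connected_graph_meets_cut)
    show "connected_graph inc V (T i)" "T i \<subseteq> E"
      using P that unfolding spanning_tree_packing_def spanning_tree_def by blast+
  qed fact
  moreover have "finite F" using G \<open>F \<subseteq> E\<close> unfolding graph_def by (auto intro: finite_subset)
  ultimately show "enat k \<le> enat (card F)"
    using P card_ge_disjoint_family_hitting[of F k T] unfolding spanning_tree_packing_def by simp
qed

lemma spanning_tree_packing_connected:
  assumes "spanning_tree_packing inc V E k T" and "k > 0"
  shows "connected_graph inc V E"
proof -
  have "spanning_tree inc V E (T 0)" using assms unfolding spanning_tree_packing_def by blast
  then show ?thesis using connected_graph_mono unfolding spanning_tree_def by blast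
qed

lemma packing_meets_boundary:
  assumes "spanning_tree_packing inc V E k T" and "A \<subseteq> V" "A \<noteq> {}" "A \<noteq> V"
  shows "\<forall>i<k. T i \<inter> boundary_edges inc E A \<noteq> {}"
proof (intro allI impI)
  fix i assume "i < k"
  obtain a b where "a \<in> A" "b \<in> V - A" using assms(2-4) by blast
  moreover have "connected_graph inc V (T i)" "T i \<subseteq> E"
    using assms(1) \<open>i < k\<close> unfolding spanning_tree_packing_def spanning_tree_def by blast+
  ultimately show "T i \<inter> boundary_edges inc E A \<noteq> {}"
    by (intro connected_graph_meets_boundary[of inc V "T i" E A a b] \<open>A \<subseteq> V\<close>)
qed

lemma spanning_tree_packing_induced:
  assumes G: "graph inc V E" and P: "spanning_tree_packing inc V E k T"
    and A: "A \<subseteq> V" "A \<noteq> {}" "A \<noteq> V" and card_le: "card (boundary_edges inc E A) \<le> k"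
  shows "spanning_tree_packing inc A (induced_edges inc E A) k (\<lambda>i. T i \<inter> induced_edges inc E A)"
proof -
  have trees: "\<And>i. i < k \<Longrightarrow> spanning_tree inc V E (T i)"
    and disj: "\<forall>i<k. \<forall>j<k. i \<noteq> j \<longrightarrow> T i \<inter> T j = {}"
    using P unfolding spanning_tree_packing_def by blast+
  have fin: "finite (boundary_edges inc E A)" using G unfolding graph_def boundary_edges_def by simp
  have "spanning_tree inc A (induced_edges inc E A) (T i \<inter> induced_edges inc E A)" if i: "i < k" for i
  proof -
    obtain f where f: "T i \<inter> boundary_edges inc E A = {f}"
      using disjoint_family_hits_once[OF fin card_le disj packing_meets_boundary[OF P A] i] by blast
    then obtain x y where "x \<in> A" "y \<in> V - A" "inc f = {x, y}"
      using boundary_edge_ends[OF G, of f A] by blast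
    moreover have "connected_graph inc V (T i)" "T i \<subseteq> E" "acyclic_edges inc (T i)"
      using trees[OF i] unfolding spanning_tree_def by blast+
    ultimately have "connected_graph inc A (T i \<inter> induced_edges inc E A)"
      using connected_graph_induced_single_crossing[of inc V "T i" A E f x y] f \<open>A \<subseteq> V\<close> by blast
    moreover have "acyclic_edges inc (T i \<inter> induced_edges inc E A)"
      using acyclic_edges_subset \<open>acyclic_edges inc (T i)\<close> by blast
    ultimately show ?thesis unfolding spanning_tree_def by blast
  qed
  then show ?thesis using disj unfolding spanning_tree_packing_def by blast
qed

lemma obtain_boundary_card_eq:
  assumes G: "graph inc V E" and P: "spanning_tree_packing inc V E k T"
    and F: "F \<subseteq> E" "card F = k" "\<not> connected_graph inc V (E - F)"
  obtains A where "A \<subseteq> V" "A \<noteq> {}" "A \<noteq> V" "card (boundary_edges inc E A) = k"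
proof -
  obtain u v where "u \<in> V" "v \<in> V" "(u, v) \<notin> (adj inc (E - F))\<^sup>*"
    using F(3) unfolding connected_graph_def by blast
  define A where "A = {x \<in> V. (u, x) \<in> (adj inc (E - F))\<^sup>*}"
  have A: "A \<subseteq> V" "A \<noteq> {}" "A \<noteq> V"
    using \<open>u \<in> V\<close> \<open>v \<in> V\<close> \<open>(u, v) \<notin> _\<close> unfolding A_def by auto
  have "card (boundary_edges inc E A) \<le> card F"
    using boundary_edges_reach_subset[OF G A_def] finite_subset[OF F(1)] G
    by (intro card_mono) (auto simp: graph_def)
  moreover have "k \<le> card (boundary_edges inc E A)"
    using card_ge_disjoint_family_hitting[OF _ _ packing_meets_boundary[OF P A]] G P
    unfolding graph_def boundary_edges_def spanning_tree_packing_def by simp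
  ultimately show ?thesis using that A F(2) by simp
qed

lemma tau_le_tau_bar:
  "subgraph inc V' E' V E \<Longrightarrow> card V' \<ge> 2 \<Longrightarrow> tau inc V' E' \<le> tau_bar inc V E"
  unfolding tau_bar_def by (rule Sup_upper) blast

lemma kappa'_le_kappa'_bar:
  "subgraph inc V' E' V E \<Longrightarrow> card V' \<ge> 2 \<Longrightarrow> kappa' inc V' E' \<le> kappa'_bar inc V E"
  unfolding kappa'_bar_def by (rule Sup_upper) blast

lemma subgraph_trans:
  "subgraph inc V'' E'' V' E' \<Longrightarrow> subgraph inc V' E' V E \<Longrightarrow> subgraph inc V'' E'' V E"
  unfolding subgraph_def by auto

lemma tau_bar_mono: "subgraph inc V' E' V E \<Longrightarrow> tau_bar inc V' E' \<le> tau_bar inc V E"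
  unfolding tau_bar_def by (rule Sup_subset_mono) (blast dest: subgraph_trans)

lemma kappa'_bar_mono: "subgraph inc V' E' V E \<Longrightarrow> kappa'_bar inc V' E' \<le> kappa'_bar inc V E"
  unfolding kappa'_bar_def by (rule Sup_subset_mono) (blast dest: subgraph_trans)

lemma subgraph_refl: "graph inc V E \<Longrightarrow> subgraph inc V E V E"
  unfolding graph_def subgraph_def by blast

lemma graph_is_K1:
  assumes "graph inc V E" and "card V < 2"
  shows "is_K1 V E"
proof -
  have "finite V" "V \<noteq> {}" using assms(1) unfolding graph_def by auto
  then have "card V = 1" using assms(2) card_gt_0_iff[of V] by linarith
  moreover have "E = {}"
  proof (rule ccontr)
    assume "E \<noteq> {}"
    then obtain e where "inc e \<subseteq> V" "card (inc e) = 2" using assms(1) unfolding graph_def by blast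
    then have "2 \<le> card V" using card_mono[OF \<open>finite V\<close>] by metis
    then show False using \<open>card V = 1\<close> by simp
  qed
  ultimately show ?thesis unfolding is_K1_def by simp
qed

lemma packed_subgraph_K1_or_extremal:
  assumes "graph inc V' E'" and sub: "subgraph inc V' E' V E"
    and P: "spanning_tree_packing inc V' E' k T"
    and tb: "tau_bar inc V E = enat k" and kb: "kappa'_bar inc V E = enat k"
  shows "is_K1 V' E' \<or> (tau inc V' E' = enat k \<and> tau_bar inc V' E' = enat k \<and>
                         kappa' inc V' E' = enat k \<and> kappa'_bar inc V' E' = enat k)"
proof (cases "card V' < 2")
  case True
  then show ?thesis using assms(1) graph_is_K1 by blast
next
  case False
  then have "card V' \<ge> 2" by simp
  note self = subgraph_refl[OF assms(1)]
  have "enat k \<le> tau inc V' E'" "tau inc V' E' \<le> tau_bar inc V' E'" "tau_bar inc V' E' \<le> enat k"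
    using tau_ge_packing[OF P] tau_le_tau_bar[OF self \<open>card V' \<ge> 2\<close>] tau_bar_mono[OF sub] tb
    by simp_all
  moreover have "enat k \<le> kappa' inc V' E'" "kappa' inc V' E' \<le> kappa'_bar inc V' E'"
    "kappa'_bar inc V' E' \<le> enat k"
    using kappa'_ge_packing[OF assms(1) P] kappa'_le_kappa'_bar[OF self \<open>card V' \<ge> 2\<close>]
      kappa'_bar_mono[OF sub] kb
    by simp_all
  ultimately show ?thesis by (metis antisym order_trans)
qed

theorem lemma3p7:
  fixes inc :: "'e \<Rightarrow> 'a set" and V :: "'a set" and E :: "'e set" and k :: nat
  assumes "graph inc V E"
    and "k > 0"
    and "tau inc V E = enat k"
    and "tau_bar inc V E = enat k"
    and "kappa' inc V E = enat k"
    and "kappa'_bar inc V E = enat k"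
  shows "\<exists>V1 E1 V2 E2. is_edge_join inc V E V1 E1 V2 E2 k \<and>
           (is_K1 V1 E1 \<or> (tau inc V1 E1 = enat k \<and> tau_bar inc V1 E1 = enat k \<and>
                            kappa' inc V1 E1 = enat k \<and> kappa'_bar inc V1 E1 = enat k)) \<and>
           (is_K1 V2 E2 \<or> (tau inc V2 E2 = enat k \<and> tau_bar inc V2 E2 = enat k \<and>
                            kappa' inc V2 E2 = enat k \<and> kappa'_bar inc V2 E2 = enat k))"
proof -
  note G = assms(1)
  obtain T where P: "spanning_tree_packing inc V E k T"
    using Sup_enat_in[OF assms(3)[unfolded tau_eq_Sup_packings] assms(2)] by blast
  obtain F where "F \<subseteq> E" "card F = k" "\<not> connected_graph inc V (E - F)"
    using Inf_enat_in[OF assms(5)[unfolded kappa'_def]] by auto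
  then obtain A where A: "A \<subseteq> V" "A \<noteq> {}" "A \<noteq> V" and "card (boundary_edges inc E A) = k"
    using obtain_boundary_card_eq[OF G P] by blast
  moreover have A': "V - A \<subseteq> V" "V - A \<noteq> {}" "V - A \<noteq> V" using A by auto
  moreover note boundary_edges_Diff[OF G, of A]
  ultimately have P1: "spanning_tree_packing inc A (induced_edges inc E A) k (\<lambda>i. T i \<inter> induced_edges inc E A)"
    and P2: "spanning_tree_packing inc (V - A) (induced_edges inc E (V - A)) k
               (\<lambda>i. T i \<inter> induced_edges inc E (V - A))"
    using spanning_tree_packing_induced[OF G P] by simp_all
  have "is_edge_join inc V E A (induced_edges inc E A) (V - A) (induced_edges inc E (V - A)) k"
    using is_edge_join_boundary[OF G A spanning_tree_packing_connected[OF P1 assms(2)]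
        spanning_tree_packing_connected[OF P2 assms(2)]] \<open>card (boundary_edges inc E A) = k\<close>
    by simp
  then show ?thesis
    using packed_subgraph_K1_or_extremal[OF graph_induced_edges[OF G A(1,2)]
        subgraph_induced_edges[OF A(1)] P1 assms(4,6)]
      packed_subgraph_K1_or_extremal[OF graph_induced_edges[OF G A'(1,2)]
        subgraph_induced_edges[OF A'(1)] P2 assms(4,6)]
    by blast
qed

end
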